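(* Let $M$ be a proper metric space and $X_1,\dots,X_n\subseteq M$ Borel subsets. Then the sets $A_0=X_1\cap\dots\cap X_n$ and $A_i=X_i^c\cap X_{i+1}\cap\dots\cap X_n$ ($i=1,\dots,n$) form a partition of $M$. Moreover, if $X_1,\dots,X_n$ is a coarsely transverse collection of half spaces, then $A_0,\dots,A_n$ is a coarsely transverse $n$-partition.
   Context: For $Y\subseteq M$, $Y_R=\{x:d(x,Y)\le R\}$. Coarsely transverse half spaces: Borel sets $X_1,\dots,X_n$ with $\bigcap_i (X_i)_R\cap (X_i^c)_R$ bounded for every $R\ge0$. A coarsely transverse $n$-partition: pairwise disjoint Borel sets $A_0,\dots,A_n$ with union $M$ such that $(A_0)_R\cap\dots\cap(A_n)_R$ is bounded for every $R\ge 0$. *)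

theory Defs
  imports "HOL-Analysis.Analysis"
begin

text \<open>Closed R-neighbourhood Y_R = {x. d(x,Y) \<le> R}. With the convention
  d(x, {}) = +infinity, the neighbourhood of the empty set is empty
  (Isabelle's infdist x {} is 0, hence the explicit guard).\<close>
definition cnbhd :: "'a::metric_space set \<Rightarrow> real \<Rightarrow> 'a set" where
  "cnbhd Y R = {x. Y \<noteq> {} \<and> infdist x Y \<le> R}"

definition coarsely_transverse_halfspaces :: "nat \<Rightarrow> (nat \<Rightarrow> 'a::metric_space set) \<Rightarrow> bool" where
  "coarsely_transverse_halfspaces n X \<longleftrightarrow>
     (\<forall>i\<in>{1..n}. X i \<in> sets borel) \<and>
     (\<forall>R\<ge>0. bounded (\<Inter>i\<in>{1..n}. cnbhd (X i) R \<inter> cnbhd (- X i) R))"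

definition coarsely_transverse_partition :: "nat \<Rightarrow> (nat \<Rightarrow> 'a::metric_space set) \<Rightarrow> bool" where
  "coarsely_transverse_partition n A \<longleftrightarrow>
     (\<forall>i\<in>{0..n}. A i \<in> sets borel) \<and>
     (\<forall>i\<in>{0..n}. \<forall>j\<in>{0..n}. i \<noteq> j \<longrightarrow> A i \<inter> A j = {}) \<and>
     (\<Union>i\<in>{0..n}. A i) = UNIV \<and>
     (\<forall>R\<ge>0. bounded (\<Inter>i\<in>{0..n}. cnbhd (A i) R))"

definition halfspace_partition :: "nat \<Rightarrow> (nat \<Rightarrow> 'a set) \<Rightarrow> nat \<Rightarrow> 'a set" where
  "halfspace_partition n X i =
     (if i = 0 then (\<Inter>j\<in>{1..n}. X j) else - X i \<inter> (\<Inter>j\<in>{i+1..n}. X j))"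

end

theory Submission
  imports Defs
begin

text \<open>A point x lies in A m for the largest m with x \<notin> X m, and in A 0 if there is no
  such m; the piece is unique because A i \<subseteq> X j for i < j while A j \<subseteq> - X j. Since moreover
  A 0 \<subseteq> X i, a point R-close to every piece is R-close to both X i and - X i for every i,
  so coarse transversality passes from the half spaces to the partition.\<close>

lemma cnbhd_mono: "A \<subseteq> B \<Longrightarrow> cnbhd A R \<subseteq> cnbhd B R"
proof
  fix x assume AB: "A \<subseteq> B" and "x \<in> cnbhd A R"
  then have ne: "A \<noteq> {}" and d: "infdist x A \<le> R"
    unfolding cnbhd_def by auto
  have "infdist x B \<le> infdist x A" by (rule infdist_mono[OF AB ne])
  moreover have "B \<noteq> {}" using AB ne by blast
  ultimately show "x \<in> cnbhd B R" using d unfolding cnbhd_def by auto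
qed

lemma halfspace_partition_zero_subset: "i \<in> {1..n} \<Longrightarrow> halfspace_partition n X 0 \<subseteq> X i"
  unfolding halfspace_partition_def by auto

lemma halfspace_partition_subset_Compl: "1 \<le> i \<Longrightarrow> halfspace_partition n X i \<subseteq> - X i"
  unfolding halfspace_partition_def by auto

lemma halfspace_partition_subset_later: "i < j \<Longrightarrow> j \<le> n \<Longrightarrow> halfspace_partition n X i \<subseteq> X j"
  unfolding halfspace_partition_def by auto

lemma halfspace_partition_disjoint:
  assumes "i \<noteq> j" "i \<le> n" "j \<le> n"
  shows "halfspace_partition n X i \<inter> halfspace_partition n X j = {}"
proof -
  have "halfspace_partition n X a \<inter> halfspace_partition n X b = {}" if "a < b" "b \<le> n" for a b
    using that halfspace_partition_subset_later[of a b n X]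
      halfspace_partition_subset_Compl[of b n X] by auto
  with assms show ?thesis
    by (metis Int_commute linorder_neqE_nat)
qed

lemma halfspace_partition_covers: "(\<Union>i\<in>{0..n}. halfspace_partition n X i) = UNIV"
proof (intro set_eqI iffI)
  fix x
  define S where "S = {j\<in>{1..n}. x \<notin> X j}"
  show "x \<in> (\<Union>i\<in>{0..n}. halfspace_partition n X i)"
  proof (cases "S = {}")
    case True
    then have "x \<in> halfspace_partition n X 0"
      unfolding S_def halfspace_partition_def by auto
    then show ?thesis by auto
  next
    case False
    define m where "m = Max S"
    have "finite S" unfolding S_def by auto
    with False have "m \<in> S" and above_m: "\<And>j. j \<in> S \<Longrightarrow> j \<le> m"
      unfolding m_def by auto
    moreover have "x \<in> X j" if "j \<in> {m+1..n}" for j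
      using that above_m[of j] unfolding S_def by (auto simp: not_less_eq_eq)
    ultimately have "x \<in> halfspace_partition n X m"
      unfolding halfspace_partition_def S_def by auto
    with \<open>m \<in> S\<close> show ?thesis unfolding S_def by auto
  qed
qed simp

lemma halfspace_partition_borel:
  assumes "\<forall>i\<in>{1..n}. X i \<in> sets borel" and "i \<le> n"
  shows "halfspace_partition n X i \<in> sets borel"
proof -
  have "(\<Inter>j\<in>J. X j) \<in> sets borel" if "J \<subseteq> {1..n}" for J
    using that assms finite_subset[OF that]
    by (intro sets.countable_INT'') (auto intro: countable_finite)
  then show ?thesis
    unfolding halfspace_partition_def using assms
    by (auto intro!: sets.Int borel_comp)
qed

lemma INT_cnbhd_halfspace_partition_subset:
  "(\<Inter>i\<in>{0..n}. cnbhd (halfspace_partition n X i) R)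
     \<subseteq> (\<Inter>i\<in>{1..n}. cnbhd (X i) R \<inter> cnbhd (- X i) R)"
proof (intro subsetI INT_I)
  fix x i
  assume x: "x \<in> (\<Inter>i\<in>{0..n}. cnbhd (halfspace_partition n X i) R)" and i: "i \<in> {1..n}"
  then have "x \<in> cnbhd (halfspace_partition n X 0) R" "x \<in> cnbhd (halfspace_partition n X i) R"
    by auto
  moreover have "cnbhd (halfspace_partition n X 0) R \<subseteq> cnbhd (X i) R"
    using i by (intro cnbhd_mono halfspace_partition_zero_subset)
  moreover have "cnbhd (halfspace_partition n X i) R \<subseteq> cnbhd (- X i) R"
    using i by (intro cnbhd_mono halfspace_partition_subset_Compl) simp
  ultimately show "x \<in> cnbhd (X i) R \<inter> cnbhd (- X i) R" by blast
qed

theorem lemma5p5: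
  fixes X :: "nat \<Rightarrow> 'a::heine_borel set" and n :: nat
  assumes "\<forall>i\<in>{1..n}. X i \<in> sets borel"
  shows "(\<forall>i\<in>{0..n}. \<forall>j\<in>{0..n}. i \<noteq> j \<longrightarrow>
            halfspace_partition n X i \<inter> halfspace_partition n X j = {})
       \<and> (\<Union>i\<in>{0..n}. halfspace_partition n X i) = UNIV
       \<and> (coarsely_transverse_halfspaces n X \<longrightarrow>
            coarsely_transverse_partition n (halfspace_partition n X))"
proof (intro conjI impI)
  show disjoint: "\<forall>i\<in>{0..n}. \<forall>j\<in>{0..n}. i \<noteq> j \<longrightarrow>
      halfspace_partition n X i \<inter> halfspace_partition n X j = {}"
    by (intro ballI impI halfspace_partition_disjoint) auto
  assume transverse: "coarsely_transverse_halfspaces n X"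
  have "bounded (\<Inter>i\<in>{0..n}. cnbhd (halfspace_partition n X i) R)" if "R \<ge> 0" for R
    using transverse that unfolding coarsely_transverse_halfspaces_def
    by (blast intro: bounded_subset[OF _ INT_cnbhd_halfspace_partition_subset])
  moreover have "halfspace_partition n X i \<in> sets borel" if "i \<in> {0..n}" for i
    using halfspace_partition_borel[OF assms] that by simp
  ultimately show "coarsely_transverse_partition n (halfspace_partition n X)"
    unfolding coarsely_transverse_partition_def
    using disjoint halfspace_partition_covers by simp
qed (rule halfspace_partition_covers)

end
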